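(* Let $\beta_\bullet\in\{\beta,\beta_v\}$, let $\to_{\beta_\bullet}$ be the contextual closure of the rule $\beta_\bullet$ on $\Lambda_{\mathcal O}$, and let $\rightsquigarrow_U$ be the unbiased iteration of an associated surface reduction (as defined in the context). Then: 1. $\rightsquigarrow_U$ is RD-diamond: whenever $M_1\leftsquigarrow_U M\rightsquigarrow_U M_2$, either $M_1=M_2$ or there is $P$ with $M_1\rightsquigarrow_UP$ and $M_2\rightsquigarrow_UP$. 2. $\rightsquigarrow_U$ has the same normal forms as $\to_{\beta_\bullet}$. 3. If $N$ is $\beta_\bullet$-normal and $M\to_{\beta_\bullet}^*N$, then $M\rightsquigarrow_U^*N$.
   Context: Terms: $M::=x\mid\lambda x.M\mid MM\mid \mathsf{op}(M,\dots,M)$ where $\mathsf{op}$ ranges over a (possibly empty) set $\mathcal O$ of operator symbols with fixed arities, up to renaming of bound variables; this set is $\Lambda_{\mathcal O}$. Values: $V::=x\mid\lambda x.M$. Contexts: $C::=[\,]\mid MC\mid CM\mid\lambda x.C\mid\mathsf{op}(M,\dots,C,\dots,M)$. Rules: $(\lambda x.M)N\mapsto_\beta M\{N/x\}$; $(\lambda x.M)V\mapsto_{\beta_v}M\{V/x\}$ for $V$ a value. $\to_{\beta_\bullet}$ is the closure of the rule under all contexts. Head contexts $H::=[\,]\mid\lambda x.H\mid HM$; weak $W::=[\,]\mid WM\mid MW$; left $L::=[\,]\mid LM\mid VL$; right $R::=[\,]\mid MR\mid RV$. Surface reduction $\to_s$: for $\beta$, the closure of $\beta$ under head contexts; for $\beta_v$,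 the closure of $\beta_v$ under weak, or left, or right contexts (any one choice). $\rightsquigarrow_U\subseteq\to_{\beta_\bullet}$ is defined inductively: if $M\to_sM'$ then $M\rightsquigarrow_UM'$; if $M$ is $\to_s$-normal, $M\rightsquigarrow_UM'$ is given by: $\lambda x.P\rightsquigarrow_U\lambda x.P'$ if $P\rightsquigarrow_UP'$; $PQ\rightsquigarrow_UP'Q$ if $P\rightsquigarrow_UP'$; $PQ\rightsquigarrow_UPQ'$ if $Q\rightsquigarrow_UQ'$; $\mathsf{op}(\dots,P_i,\dots)\rightsquigarrow_U\mathsf{op}(\dots,P_i',\dots)$ if $P_i\rightsquigarrow_UP_i'$. *)

theory Defs
  imports Main
begin

(* Lambda terms with operators, in de Bruijn representation (terms up to alpha). *)
datatype 'o trm = Var nat | Lam "'o trm" | App "'o trm" "'o trm" | Op 'o "'o trm list"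

fun wf :: "('o \<Rightarrow> nat) \<Rightarrow> 'o trm \<Rightarrow> bool" where
  "wf ar (Var i) = True"
| "wf ar (Lam t) = wf ar t"
| "wf ar (App s t) = (wf ar s \<and> wf ar t)"
| "wf ar (Op f ts) = (length ts = ar f \<and> (\<forall>t\<in>set ts. wf ar t))"

fun lift :: "nat \<Rightarrow> 'o trm \<Rightarrow> 'o trm" where
  "lift k (Var i) = (if i < k then Var i else Var (Suc i))"
| "lift k (Lam t) = Lam (lift (Suc k) t)"
| "lift k (App s t) = App (lift k s) (lift k t)"
| "lift k (Op f ts) = Op f (map (lift k) ts)"

(* subst t k s = t{s/k}, removing the binder k *)
fun subst :: "'o trm \<Rightarrow> nat \<Rightarrow> 'o trm \<Rightarrow> 'o trm" where
  "subst (Var i) k s = (if i < k then Var i else if i = k then s else Var (i - 1))"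
| "subst (Lam t) k s = Lam (subst t (Suc k) (lift 0 s))"
| "subst (App t u) k s = App (subst t k s) (subst u k s)"
| "subst (Op f ts) k s = Op f (map (\<lambda>t. subst t k s) ts)"

fun is_val :: "'o trm \<Rightarrow> bool" where
  "is_val (Var _) = True"
| "is_val (Lam _) = True"
| "is_val _ = False"

(* The calculi: call-by-name beta with head surface reduction, or call-by-value beta_v
   with weak / left / right surface reduction. *)
datatype calc = CbnHead | CbvWeak | CbvLeft | CbvRight

fun is_cbv :: "calc \<Rightarrow> bool" where
  "is_cbv CbnHead = False"
| "is_cbv _ = True"

inductive rootstep :: "calc \<Rightarrow> 'o trm \<Rightarrow> 'o trm \<Rightarrow> bool" for c where
  beta: "\<not> is_cbv c \<Longrightarrow> rootstep c (App (Lam t) s) (subst t 0 s)"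
| betav: "is_cbv c \<Longrightarrow> is_val v \<Longrightarrow> rootstep c (App (Lam t) v) (subst t 0 v)"

inductive step :: "calc \<Rightarrow> 'o trm \<Rightarrow> 'o trm \<Rightarrow> bool" for c where
  root: "rootstep c M N \<Longrightarrow> step c M N"
| appL: "step c M M' \<Longrightarrow> step c (App M N) (App M' N)"
| appR: "step c N N' \<Longrightarrow> step c (App M N) (App M N')"
| lam: "step c M M' \<Longrightarrow> step c (Lam M) (Lam M')"
| op: "step c M M' \<Longrightarrow> step c (Op f (xs @ M # ys)) (Op f (xs @ M' # ys))"

inductive sred :: "calc \<Rightarrow> 'o trm \<Rightarrow> 'o trm \<Rightarrow> bool" for c where
  root: "rootstep c M N \<Longrightarrow> sred c M N"
| head_lam: "c = CbnHead \<Longrightarrow> sred c M M' \<Longrightarrow> sred c (Lam M) (Lam M')"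
| head_app: "c = CbnHead \<Longrightarrow> sred c M M' \<Longrightarrow> sred c (App M N) (App M' N)"
| weak_l: "c = CbvWeak \<Longrightarrow> sred c M M' \<Longrightarrow> sred c (App M N) (App M' N)"
| weak_r: "c = CbvWeak \<Longrightarrow> sred c N N' \<Longrightarrow> sred c (App M N) (App M N')"
| left_l: "c = CbvLeft \<Longrightarrow> sred c M M' \<Longrightarrow> sred c (App M N) (App M' N)"
| left_r: "c = CbvLeft \<Longrightarrow> is_val V \<Longrightarrow> sred c N N' \<Longrightarrow> sred c (App V N) (App V N')"
| right_r: "c = CbvRight \<Longrightarrow> sred c N N' \<Longrightarrow> sred c (App M N) (App M N')"
| right_l: "c = CbvRight \<Longrightarrow> is_val V \<Longrightarrow> sred c M M' \<Longrightarrow> sred c (App M V) (App M' V)"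

definition snormal :: "calc \<Rightarrow> 'o trm \<Rightarrow> bool" where
  "snormal c M \<longleftrightarrow> (\<nexists>N. sred c M N)"

inductive ured :: "calc \<Rightarrow> 'o trm \<Rightarrow> 'o trm \<Rightarrow> bool" for c where
  surf: "sred c M M' \<Longrightarrow> ured c M M'"
| lam: "snormal c (Lam P) \<Longrightarrow> ured c P P' \<Longrightarrow> ured c (Lam P) (Lam P')"
| appL: "snormal c (App P Q) \<Longrightarrow> ured c P P' \<Longrightarrow> ured c (App P Q) (App P' Q)"
| appR: "snormal c (App P Q) \<Longrightarrow> ured c Q Q' \<Longrightarrow> ured c (App P Q) (App P Q')"
| op: "snormal c (Op f (xs @ P # ys)) \<Longrightarrow> ured c P P'
       \<Longrightarrow> ured c (Op f (xs @ P # ys)) (Op f (xs @ P' # ys))"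

end

theory Submission
  imports Defs
begin

(* Parts 1 and 2 are local. Surface reduction is diamond and commutes with substitution. A step
   out of a surface-normal term preserves surface normality and the outermost constructor, so below
   a surface-normal term the unbiased iteration rewrites exactly one immediate subterm and the
   diamond property lifts by induction; as it descends through all surface-normal terms, it
   reaches every redex.

   Part 3 rests on a factorization in the style of Takahashi: an internal parallel step (one that
   fires no surface redex) followed by a surface step can be rearranged into surface steps followed
   by an internal parallel step, hence every reduction sequence is a sequence of surface steps
   followed by internal parallel steps. Internal parallel steps reflect surface normality, so a
   reduction M ->* N to a normal form passes through a surface-normal L with the same outermost
   constructor as N. The unbiased iteration performs the surface steps to L and then, by induction
   on N, the reductions of the immediate subterms. *)

section \<open>Substitution\<close>

lemma lift_lift:
  "i < k + 1 \<Longrightarrow> lift (Suc k) (lift i t) = lift i (lift k t)"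
  by (induct t arbitrary: i k) auto

lemma lift_subst [simp]:
  "j < i + 1 \<Longrightarrow> lift i (subst t j s) = subst (lift (i + 1) t) j (lift i s)"
  by (induct t arbitrary: i j s) (auto simp: diff_Suc lift_lift split: nat.split)

lemma lift_subst_lt:
  "i < j + 1 \<Longrightarrow> lift i (subst t j s) = subst (lift i t) (j + 1) (lift i s)"
  by (induct t arbitrary: i j s) (auto simp: lift_lift)

lemma subst_lift [simp]: "subst (lift k t) k s = t"
  by (induct t arbitrary: k s) (auto simp: map_idI)

lemma subst_subst:
  "i < j + 1 \<Longrightarrow> subst (subst t (Suc j) (lift i v)) i (subst u j v) = subst (subst t i u) j v"
  by (induct t arbitrary: i j u v)
    (auto simp: diff_Suc lift_lift [symmetric] lift_subst_lt split: nat.split)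

lemma subst_subst_0:
  "subst (subst t 0 u) k v = subst (subst t (Suc k) (lift 0 v)) 0 (subst u k v)"
  using subst_subst[of 0 k t v u] by simp

fun shape :: "'o trm \<Rightarrow> nat" where
  "shape (Var _) = 0" | "shape (Lam _) = 1" | "shape (App _ _) = 2" | "shape (Op _ _) = 3"

lemma is_val_iff_shape: "is_val M \<longleftrightarrow> shape M \<le> 1"
  by (cases M) auto

lemma is_val_lift [simp]: "is_val (lift k v) = is_val v"
  by (cases v) auto

lemma is_val_subst [simp]: "is_val s \<Longrightarrow> is_val (subst v k s) = is_val v"
  by (cases v) auto

lemma is_cbv_iff: "is_cbv c \<longleftrightarrow> c \<noteq> CbnHead"
  by (cases c) auto

lemma rootstep_iff:
  "rootstep c M N \<longleftrightarrow> (\<exists>t s. M = App (Lam t) s \<and> N = subst t 0 s \<and> (is_cbv c \<longrightarrow> is_val s))"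
  by (auto elim: rootstep.cases intro: rootstep.intros)

section \<open>Surface reduction\<close>

lemma sred_Var [simp]: "\<not> sred c (Var i) N"
  by (auto elim: sred.cases simp: rootstep_iff)

lemma sred_Op [simp]: "\<not> sred c (Op f ts) N"
  by (auto elim: sred.cases simp: rootstep_iff)

lemma sred_Lam_iff: "sred c (Lam t) N \<longleftrightarrow> c = CbnHead \<and> (\<exists>t'. N = Lam t' \<and> sred c t t')"
  by (auto elim: sred.cases intro: sred.intros simp: rootstep_iff)

lemma sred_val: "is_cbv c \<Longrightarrow> is_val v \<Longrightarrow> \<not> sred c v N"
  by (cases v) (auto simp: sred_Lam_iff)

inductive_cases sred_AppE: "sred c (App s t) N"

lemma sred_appL: "c \<noteq> CbvRight \<or> is_val t \<Longrightarrow> sred c s s' \<Longrightarrow> sred c (App s t) (App s' t)"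
  by (cases c) (auto intro: sred.intros)

lemma sred_appR:
  "c = CbvWeak \<or> c = CbvRight \<or> c = CbvLeft \<and> is_val s \<Longrightarrow> sred c t t' \<Longrightarrow> sred c (App s t) (App s t')"
  by (cases c) (auto intro: sred.intros)

lemma snormal_Var [simp]: "snormal c (Var i)"
  by (simp add: snormal_def)

lemma snormal_Op [simp]: "snormal c (Op f ts)"
  by (simp add: snormal_def)

lemma snormal_Lam [simp]: "snormal c (Lam t) \<longleftrightarrow> (c = CbnHead \<longrightarrow> snormal c t)"
  by (auto simp: snormal_def sred_Lam_iff)

lemma snormal_App:
  "snormal c (App s t) \<longleftrightarrow> \<not> (shape s = 1 \<and> (is_cbv c \<longrightarrow> is_val t))
     \<and> (c = CbnHead \<longrightarrow> snormal c s)
     \<and> (c = CbvWeak \<longrightarrow> snormal c s \<and> snormal c t)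
     \<and> (c = CbvLeft \<longrightarrow> snormal c s \<and> (is_val s \<longrightarrow> snormal c t))
     \<and> (c = CbvRight \<longrightarrow> snormal c t \<and> (is_val t \<longrightarrow> snormal c s))"
proof -
  have "(\<exists>N. sred c (App s t) N) \<longleftrightarrow> (shape s = 1 \<and> (is_cbv c \<longrightarrow> is_val t))
     \<or> (\<exists>s'. sred c s s') \<and> (c \<noteq> CbvRight \<or> is_val t)
     \<or> (\<exists>t'. sred c t t') \<and> (c = CbvWeak \<or> c = CbvRight \<or> c = CbvLeft \<and> is_val s)"
    (is "_ \<longleftrightarrow> ?R")
  proof
    assume "\<exists>N. sred c (App s t) N"
    then show "?R" by (auto elim!: sred_AppE simp: rootstep_iff)
  next
    assume ?R
    moreover have "\<exists>N. sred c (App s t) N" if "shape s = 1" "is_cbv c \<longrightarrow> is_val t"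
      using that by (cases s) (auto intro!: sred.root rootstep.intros)
    ultimately show "\<exists>N. sred c (App s t) N" by (blast intro: sred_appL sred_appR)
  qed
  then show ?thesis
    unfolding snormal_def by (cases c) auto
qed

lemma sred_lift: "sred c t t' \<Longrightarrow> sred c (lift k t) (lift k t')"
proof (induction arbitrary: k rule: sred.induct)
  case (root M N)
  then show ?case by (auto simp: rootstep_iff intro!: sred.root)
qed (auto intro: sred.intros)

lemma sred_subst:
  "sred c t t' \<Longrightarrow> is_cbv c \<longrightarrow> is_val s \<Longrightarrow> sred c (subst t k s) (subst t' k s)"
proof (induction arbitrary: k s rule: sred.induct)
  case (root M N)
  then show ?case by (auto simp: rootstep_iff subst_subst_0 intro!: sred.root)
qed (auto intro: sred.intros)

lemma sred_beta: "is_cbv c \<longrightarrow> is_val s \<Longrightarrow> sred c (App (Lam t) s) (subst t 0 s)"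
  by (cases "is_cbv c") (auto intro: sred.root rootstep.intros)

(* The only critical pair is a CbN root redex against a head step inside its abstraction; it is
   closed by substituting into the head step. *)
lemma sred_diamond:
  "sred c M M1 \<Longrightarrow> sred c M M2 \<Longrightarrow> M1 = M2 \<or> (\<exists>P. sred c M1 P \<and> sred c M2 P)"
  by (induction arbitrary: M2 rule: sred.induct)
    (auto elim!: sred_AppE simp: rootstep_iff sred_Lam_iff sred_val intro: sred.intros,
      (blast intro: sred_beta[of CbnHead, simplified] sred_subst[of CbnHead, simplified])+)

section \<open>Unbiased iteration: diamond and normal forms\<close>

lemma step_Var [simp]: "\<not> step c (Var i) N"
  by (auto elim: step.cases simp: rootstep_iff)

lemma step_Lam_iff: "step c (Lam t) N \<longleftrightarrow> (\<exists>t'. N = Lam t' \<and> step c t t')"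
  by (auto elim: step.cases intro: step.intros simp: rootstep_iff)

lemma step_Op_iff:
  "step c (Op f ts) N \<longleftrightarrow> (\<exists>xs P P' ys. ts = xs @ P # ys \<and> N = Op f (xs @ P' # ys) \<and> step c P P')"
  by (rule iffI, erule step.cases) (auto intro: step.op simp: rootstep_iff)

inductive_cases step_AppE: "step c (App s t) N"

lemma sred_imp_step: "sred c M N \<Longrightarrow> step c M N"
  by (induction rule: sred.induct) (auto intro: step.intros)

lemma ured_imp_step: "ured c M N \<Longrightarrow> step c M N"
  by (induction rule: ured.induct) (auto intro: step.intros sred_imp_step)

lemma step_preserves_snormal: "step c M M' \<Longrightarrow> snormal c M \<Longrightarrow> snormal c M' \<and> shape M' = shape M"
proof (induction rule: step.induct)
  case (root M N)
  then show ?case by (auto simp: snormal_def intro: sred.root)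
next
  case (appL M M' N)
  show ?case
    using appL.prems appL.IH
    by (cases c; cases "is_val N") (simp_all add: snormal_App is_val_iff_shape)
next
  case (appR N N' M)
  show ?case
    using appR.prems appR.IH
    by (cases c; cases "is_val M") (simp_all add: snormal_App is_val_iff_shape)
qed auto

lemma ured_preserves_snormal: "ured c M M' \<Longrightarrow> snormal c M \<Longrightarrow> snormal c M'"
  using ured_imp_step step_preserves_snormal by blast

lemma ured_not_snormal: "ured c M N \<Longrightarrow> \<not> snormal c M \<Longrightarrow> sred c M N"
  by (induction rule: ured.induct) auto

lemma ured_Lam_snormal:
  "snormal c (Lam P) \<Longrightarrow> ured c (Lam P) N \<Longrightarrow> \<exists>P'. N = Lam P' \<and> ured c P P'"
  by (erule ured.cases) (auto simp: snormal_def)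

lemma ured_App_snormal:
  "snormal c (App P Q) \<Longrightarrow> ured c (App P Q) N \<Longrightarrow>
   (\<exists>P'. N = App P' Q \<and> ured c P P') \<or> (\<exists>Q'. N = App P Q' \<and> ured c Q Q')"
  by (erule ured.cases) (auto simp: snormal_def)

lemma ured_Op_update:
  "ured c (Op f ts) N \<Longrightarrow> \<exists>i u. i < length ts \<and> N = Op f (ts[i := u]) \<and> ured c (ts ! i) u"
  by (erule ured.cases) (auto simp: nth_append)

lemma ured_Op_updateI: "i < length ts \<Longrightarrow> ured c (ts ! i) u \<Longrightarrow> ured c (Op f ts) (Op f (ts[i := u]))"
  using ured.op[of c f "take i ts" "ts ! i" "drop (Suc i) ts" u]
  by (simp add: id_take_nth_drop[symmetric] upd_conv_take_nth_drop)

lemma ured_Op_diamond: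
  assumes "i < length ts" and "ured c (ts ! i) u1" and "ured c (Op f ts) M2"
    and IH: "\<And>u2. ured c (ts ! i) u2 \<Longrightarrow> u1 = u2 \<or> (\<exists>R. ured c u1 R \<and> ured c u2 R)"
  shows "Op f (ts[i := u1]) = M2 \<or> (\<exists>P. ured c (Op f (ts[i := u1])) P \<and> ured c M2 P)"
proof -
  from ured_Op_update[OF assms(3)] obtain j u2
    where j: "j < length ts" "M2 = Op f (ts[j := u2])" "ured c (ts ! j) u2"
    by blast
  show ?thesis
  proof (cases "i = j")
    case True
    with j IH consider "u1 = u2" | R where "ured c u1 R" "ured c u2 R"
      by blast
    then show ?thesis
    proof cases
      case 1
      with j True show ?thesis by simp
    next
      case 2
      have "ured c (Op f (ts[i := u1])) (Op f (ts[i := R]))"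
        using ured_Op_updateI[of i "ts[i := u1]" c R f] assms(1) 2 by simp
      moreover have "ured c M2 (Op f (ts[i := R]))"
        using ured_Op_updateI[of j "ts[j := u2]" c R f] j 2 True by simp
      ultimately show ?thesis by blast
    qed
  next
    case False
    have "ured c (Op f (ts[i := u1])) (Op f (ts[i := u1, j := u2]))"
      using ured_Op_updateI[of j "ts[i := u1]" c u2 f] j False by simp
    moreover have "ured c M2 (Op f (ts[j := u2, i := u1]))"
      using ured_Op_updateI[of i "ts[j := u2]" c u1 f] j False assms(1,2) by simp
    ultimately show ?thesis
      using False by (auto simp: list_update_swap)
  qed
qed

lemma ured_App_commute:
  assumes "snormal c (App P Q)" and "ured c P P'" and "ured c Q Q'"
  shows "ured c (App P' Q) (App P' Q') \<and> ured c (App P Q') (App P' Q')"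
proof -
  have "snormal c (App P' Q)" "snormal c (App P Q')"
    using assms by (blast intro: ured.appL ured.appR ured_preserves_snormal)+
  with assms show ?thesis by (blast intro: ured.appL ured.appR)
qed

lemma ured_diamond:
  "ured c M M1 \<Longrightarrow> ured c M M2 \<Longrightarrow> M1 = M2 \<or> (\<exists>P. ured c M1 P \<and> ured c M2 P)"
proof (induction arbitrary: M2 rule: ured.induct)
  case (surf M M1)
  then have "sred c M M2"
    by (auto simp: snormal_def intro: ured_not_snormal)
  with sred_diamond[OF surf.hyps this] show ?case
    by (blast intro: ured.surf)
next
  case (lam P P1)
  from ured_Lam_snormal[OF lam.hyps(1) lam.prems] obtain P2 where "M2 = Lam P2" "ured c P P2"
    by blast
  moreover have "snormal c (Lam P1)" "snormal c (Lam P2)"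
    using lam.hyps calculation by (blast intro: ured.lam ured_preserves_snormal)+
  ultimately show ?case
    using lam.IH by (blast intro: ured.lam)
next
  case (appL P Q P1)
  from ured_App_snormal[OF appL.hyps(1) appL.prems] show ?case
  proof (elim disjE exE conjE)
    fix P2 assume "M2 = App P2 Q" "ured c P P2"
    moreover have "snormal c (App P1 Q)" "snormal c (App P2 Q)"
      using appL.hyps calculation by (blast intro: ured.appL ured_preserves_snormal)+
    ultimately show ?case
      using appL.IH by (blast intro: ured.appL)
  next
    fix Q2 assume "M2 = App P Q2" "ured c Q Q2"
    then show ?case
      using ured_App_commute appL.hyps by blast
  qed
next
  case (appR P Q Q1)
  from ured_App_snormal[OF appR.hyps(1) appR.prems] show ?case
  proof (elim disjE exE conjE)
    fix P2 assume "M2 = App P2 Q" "ured c P P2"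
    then show ?case
      using ured_App_commute appR.hyps by blast
  next
    fix Q2 assume "M2 = App P Q2" "ured c Q Q2"
    moreover have "snormal c (App P Q1)" "snormal c (App P Q2)"
      using appR.hyps calculation by (blast intro: ured.appR ured_preserves_snormal)+
    ultimately show ?case
      using appR.IH by (blast intro: ured.appR)
  qed
next
  case (op f xs P ys P1)
  then show ?case
    using ured_Op_diamond[of "length xs" "xs @ P # ys" c P1 f M2] by simp
qed

lemma ured_exI_snormal: "(snormal c M \<Longrightarrow> \<exists>N. ured c M N) \<Longrightarrow> \<exists>N. ured c M N"
  by (auto simp: snormal_def intro: ured.surf)

lemma step_imp_ured: "step c M N \<Longrightarrow> \<exists>N'. ured c M N'"
  by (induction rule: step.induct)
    (rule ured_exI_snormal; blast intro: ured.intros sred.root)+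

lemma ured_nf_iff_step_nf: "(\<nexists>N. ured c M N) \<longleftrightarrow> (\<nexists>N. step c M N)"
  using step_imp_ured ured_imp_step by blast

inductive par :: "calc \<Rightarrow> 'o trm \<Rightarrow> 'o trm \<Rightarrow> bool" for c where
  pvar: "par c (Var i) (Var i)"
| plam: "par c t t' \<Longrightarrow> par c (Lam t) (Lam t')"
| papp: "par c s s' \<Longrightarrow> par c t t' \<Longrightarrow> par c (App s t) (App s' t')"
| pop: "list_all2 (par c) ts ts' \<Longrightarrow> par c (Op f ts) (Op f ts')"
| pbeta: "par c t t' \<Longrightarrow> par c s s' \<Longrightarrow> is_cbv c \<longrightarrow> is_val s \<Longrightarrow> par c (App (Lam t) s) (subst t' 0 s')"

lemma par_refl: "par c t t"
  by (induction t) (auto intro: par.intros simp: list_all2_same)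

lemma par_val: "par c v v' \<Longrightarrow> is_val v \<Longrightarrow> is_val v'"
  by (erule par.cases) auto

lemma par_lift: "par c t t' \<Longrightarrow> par c (lift k t) (lift k t')"
proof (induction arbitrary: k rule: par.induct)
  case (pbeta t t' s s')
  then show ?case
    using par.pbeta[of c "lift (Suc k) t" "lift (Suc k) t'" "lift k s" "lift k s'"] by simp
qed (auto simp: list_all2_map1 list_all2_map2 intro!: par.intros elim!: list_all2_mono)

lemma par_subst:
  "par c t t' \<Longrightarrow> par c s s' \<Longrightarrow> is_cbv c \<longrightarrow> is_val s \<Longrightarrow> par c (subst t k s) (subst t' k s')"
proof (induction arbitrary: k s s' rule: par.induct)
  case (plam t t')
  have "par c (subst t (Suc k) (lift 0 s)) (subst t' (Suc k) (lift 0 s'))"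
    using plam.prems by (intro plam.IH) (simp_all add: par_lift)
  then show ?case by (simp add: par.plam)
next
  case (pbeta t t' b b')
  have "par c (subst t (Suc k) (lift 0 s)) (subst t' (Suc k) (lift 0 s'))"
    using pbeta.prems by (intro pbeta.IH(1)) (simp_all add: par_lift)
  with pbeta show ?case
    by (auto simp: subst_subst_0 intro!: par.pbeta)
qed (auto simp: list_all2_map1 list_all2_map2 intro!: par.intros par_lift elim!: list_all2_mono)

lemma step_imp_par: "step c M N \<Longrightarrow> par c M N"
proof (induction rule: step.induct)
  case (root M N)
  then show ?case by (auto simp: rootstep_iff intro!: par.pbeta par_refl)
next
  case (op M M' f xs ys)
  then show ?case by (auto intro!: par.pop list_all2_appendI simp: list_all2_same par_refl)
qed (auto intro: par.intros par_refl)

(* Internal parallel reduction: a parallel step that contracts no redex in surface position. *)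

inductive ipar :: "calc \<Rightarrow> 'o trm \<Rightarrow> 'o trm \<Rightarrow> bool" for c where
  ivar: "ipar c (Var i) (Var i)"
| ilam_n: "c = CbnHead \<Longrightarrow> ipar c t t' \<Longrightarrow> ipar c (Lam t) (Lam t')"
| ilam_v: "is_cbv c \<Longrightarrow> par c t t' \<Longrightarrow> ipar c (Lam t) (Lam t')"
| iop: "list_all2 (par c) ts ts' \<Longrightarrow> ipar c (Op f ts) (Op f ts')"
| iapp_n: "c = CbnHead \<Longrightarrow> ipar c s s' \<Longrightarrow> par c t t' \<Longrightarrow> ipar c (App s t) (App s' t')"
| iapp_w: "c = CbvWeak \<Longrightarrow> ipar c s s' \<Longrightarrow> ipar c t t' \<Longrightarrow> ipar c (App s t) (App s' t')"
| iapp_lv: "c = CbvLeft \<Longrightarrow> is_val s \<Longrightarrow> ipar c s s' \<Longrightarrow> ipar c t t' \<Longrightarrow> ipar c (App s t) (App s' t')"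
| iapp_ln: "c = CbvLeft \<Longrightarrow> \<not> is_val s \<Longrightarrow> ipar c s s' \<Longrightarrow> par c t t' \<Longrightarrow> ipar c (App s t) (App s' t')"
| iapp_rv: "c = CbvRight \<Longrightarrow> is_val t \<Longrightarrow> ipar c s s' \<Longrightarrow> ipar c t t' \<Longrightarrow> ipar c (App s t) (App s' t')"
| iapp_rn: "c = CbvRight \<Longrightarrow> \<not> is_val t \<Longrightarrow> par c s s' \<Longrightarrow> ipar c t t' \<Longrightarrow> ipar c (App s t) (App s' t')"

lemma ipar_imp_par: "ipar c t t' \<Longrightarrow> par c t t'"
  by (induction rule: ipar.induct) (auto intro: par.intros)

lemma ipar_refl: "ipar c t t"
proof (induction t)
  case (Lam t)
  show ?case
    by (insert Lam, cases "c = CbnHead")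
      (auto intro: ipar.ilam_n ipar.ilam_v par_refl simp: is_cbv_iff)
next
  case (App s t)
  show ?case
    by (insert App, cases c; cases "is_val s"; cases "is_val t") (auto intro: ipar.intros par_refl)
qed (auto intro!: ipar.intros par_refl simp: list_all2_same)

lemma ipar_shape: "ipar c t t' \<Longrightarrow> shape t' = shape t"
  by (erule ipar.cases) auto

lemma ipar_val_iff: "ipar c t t' \<Longrightarrow> is_val t' = is_val t"
  by (metis ipar_shape is_val_iff_shape)

lemma ipar_lift: "ipar c t t' \<Longrightarrow> ipar c (lift k t) (lift k t')"
proof (induction arbitrary: k rule: ipar.induct)
  case (iop ts ts' f)
  then show ?case
    by (auto simp: list_all2_map1 list_all2_map2 intro!: ipar.iop elim!: list_all2_mono par_lift)
qed (auto intro: ipar.intros par_lift)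

lemma par_val_imp_ipar: "is_cbv c \<Longrightarrow> is_val s \<Longrightarrow> par c s s' \<Longrightarrow> ipar c s s'"
  by (erule par.cases) (auto intro: ipar.intros)

lemma ipar_subst_cbv:
  "ipar c t t' \<Longrightarrow> is_cbv c \<Longrightarrow> par c s s' \<Longrightarrow> is_val s \<Longrightarrow> ipar c (subst t k s) (subst t' k s')"
proof (induction arbitrary: k s s' rule: ipar.induct)
  case (ilam_v t t')
  then show ?case by (auto intro!: ipar.ilam_v par_subst par_lift)
next
  case (iop ts ts' f)
  then show ?case
    by (auto simp: list_all2_map1 list_all2_map2 intro!: ipar.iop elim!: list_all2_mono
        intro: par_subst)
qed (auto intro: ipar.intros par_val_imp_ipar par_subst)

section \<open>Factorization\<close>

lemma rtranclp_map:
  assumes "\<And>x y. R x y \<Longrightarrow> S (f x) (f y)" and "R\<^sup>*\<^sup>* a b"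
  shows "S\<^sup>*\<^sup>* (f a) (f b)"
  using assms(2)
  by (induction rule: rtranclp_induct) (auto intro: rtranclp.rtrancl_into_rtrancl assms(1))

lemma sreds_appL:
  "c \<noteq> CbvRight \<or> is_val t \<Longrightarrow> (sred c)\<^sup>*\<^sup>* s s' \<Longrightarrow> (sred c)\<^sup>*\<^sup>* (App s t) (App s' t)"
  using rtranclp_map[of "sred c" "sred c" "\<lambda>x. App x t"] sred_appL by blast

lemma sreds_appR:
  "c = CbvWeak \<or> c = CbvRight \<or> c = CbvLeft \<and> is_val s \<Longrightarrow> (sred c)\<^sup>*\<^sup>* t t' \<Longrightarrow>
   (sred c)\<^sup>*\<^sup>* (App s t) (App s t')"
  using rtranclp_map[of "sred c" "sred c" "\<lambda>x. App s x"] sred_appR by blast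

lemma sreds_Lam: "c = CbnHead \<Longrightarrow> (sred c)\<^sup>*\<^sup>* s s' \<Longrightarrow> (sred c)\<^sup>*\<^sup>* (Lam s) (Lam s')"
  using rtranclp_map[of "sred c" "sred c" Lam] sred.head_lam by blast

lemma sreds_subst:
  "(sred c)\<^sup>*\<^sup>* t t' \<Longrightarrow> is_cbv c \<longrightarrow> is_val s \<Longrightarrow> (sred c)\<^sup>*\<^sup>* (subst t k s) (subst t' k s)"
  using rtranclp_map[of "sred c" "sred c" "\<lambda>x. subst x k s"] sred_subst by blast

lemma sreds_ipar_lift:
  "((sred c)\<^sup>*\<^sup>* OO ipar c) t t' \<Longrightarrow> ((sred c)\<^sup>*\<^sup>* OO ipar c) (lift k t) (lift k t')"
  using rtranclp_map[of "sred c" "sred c" "lift k"] sred_lift ipar_lift by blast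

lemma sreds_ipar_App:
  assumes "par c s s'" and "par c t t'"
    and s: "((sred c)\<^sup>*\<^sup>* OO ipar c) s s'" and t: "((sred c)\<^sup>*\<^sup>* OO ipar c) t t'"
  shows "((sred c)\<^sup>*\<^sup>* OO ipar c) (App s t) (App s' t')"
proof -
  from s t obtain L1 L2 where L1: "(sred c)\<^sup>*\<^sup>* s L1" "ipar c L1 s'"
    and L2: "(sred c)\<^sup>*\<^sup>* t L2" "ipar c L2 t'"
    by blast
  have left: "(sred c)\<^sup>*\<^sup>* (App s t) (App L1 t)" if "c \<noteq> CbvRight"
    using sreds_appL L1(1) that by blast
  have right: "(sred c)\<^sup>*\<^sup>* (App s t) (App s L2)" if "c = CbvRight"
    using sreds_appR L2(1) that by blast
  have both: "(sred c)\<^sup>*\<^sup>* (App s t) (App L1 L2)"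
    if "c = CbvWeak \<or> c = CbvLeft \<and> is_val L1 \<or> c = CbvRight \<and> is_val L2"
  proof (cases "c = CbvRight")
    case True
    then have "(sred c)\<^sup>*\<^sup>* (App s L2) (App L1 L2)"
      using that sreds_appL L1(1) by blast
    with right True show ?thesis by simp
  next
    case False
    then have "(sred c)\<^sup>*\<^sup>* (App L1 t) (App L1 L2)"
      using that sreds_appR L2(1) by blast
    with left False show ?thesis by simp
  qed
  show ?thesis
  proof (cases c)
    case CbnHead
    with left L1(2) assms(2) show ?thesis by (blast intro: ipar.iapp_n)
  next
    case CbvWeak
    with both L1(2) L2(2) show ?thesis by (blast intro: ipar.iapp_w)
  next
    case CbvLeft
    with left both L1(2) L2(2) assms(2) show ?thesis
      by (cases "is_val L1") (blast intro: ipar.iapp_lv ipar.iapp_ln)+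
  next
    case CbvRight
    with right both L1(2) L2(2) assms(1) show ?thesis
      by (cases "is_val L2") (blast intro: ipar.iapp_rv ipar.iapp_rn)+
  qed
qed

(* In CbN the substituted argument may land in head position, so substituting into an internal step
   only factors as surface steps followed by an internal step. *)
lemma ipar_subst_cbn:
  "ipar CbnHead t t' \<Longrightarrow> ((sred CbnHead)\<^sup>*\<^sup>* OO ipar CbnHead) s s' \<Longrightarrow> par CbnHead s s' \<Longrightarrow>
   ((sred CbnHead)\<^sup>*\<^sup>* OO ipar CbnHead) (subst t k s) (subst t' k s')"
proof (induction t t' arbitrary: k s s' rule: ipar.induct)
  case (ilam_n t t')
  then have "((sred CbnHead)\<^sup>*\<^sup>* OO ipar CbnHead)
      (subst t (Suc k) (lift 0 s)) (subst t' (Suc k) (lift 0 s'))"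
    by (blast intro: sreds_ipar_lift par_lift)
  then show ?case
    by (auto intro: sreds_Lam ipar.ilam_n)
next
  case (iop ts ts' f)
  then have "ipar CbnHead (subst (Op f ts) k s) (subst (Op f ts') k s')"
    by (auto simp: list_all2_map1 list_all2_map2 intro!: ipar.iop elim!: list_all2_mono
        intro: par_subst[of CbnHead, simplified])
  then show ?case by blast
next
  case (iapp_n u u' v v')
  then obtain L where "(sred CbnHead)\<^sup>*\<^sup>* (subst u k s) L" "ipar CbnHead L (subst u' k s')"
    by blast
  moreover have "par CbnHead (subst v k s) (subst v' k s')"
    using iapp_n by (simp add: par_subst)
  ultimately show ?case
    by (auto intro!: relcomppI[where b = "App L (subst v k s)"] sreds_appL ipar.iapp_n)
qed (auto intro: ipar.ivar)

lemma ipar_imp_sreds_ipar: "ipar c M N \<Longrightarrow> ((sred c)\<^sup>*\<^sup>* OO ipar c) M N"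
  by blast

lemma sreds_ipar_beta:
  assumes "par c t t'" and "par c s s'" and "is_cbv c \<longrightarrow> is_val s"
    and t: "((sred c)\<^sup>*\<^sup>* OO ipar c) t t'" and s: "((sred c)\<^sup>*\<^sup>* OO ipar c) s s'"
  shows "((sred c)\<^sup>*\<^sup>* OO ipar c) (App (Lam t) s) (subst t' 0 s')"
proof -
  from t obtain L where L: "(sred c)\<^sup>*\<^sup>* t L" "ipar c L t'"
    by blast
  have "((sred c)\<^sup>*\<^sup>* OO ipar c) (subst L 0 s) (subst t' 0 s')"
  proof (cases "c = CbnHead")
    case True
    with assms L(2) show ?thesis
      using ipar_subst_cbn[of L t' s s' 0] by simp
  next
    case False
    with assms L(2) show ?thesis
      using ipar_subst_cbv[of c L t' s s' 0] by (simp add: is_cbv_iff ipar_imp_sreds_ipar)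
  qed
  then obtain R where R: "(sred c)\<^sup>*\<^sup>* (subst L 0 s) R" "ipar c R (subst t' 0 s')"
    by blast
  have "sred c (App (Lam t) s) (subst t 0 s)"
    using assms(3) by (rule sred_beta)
  also have "(sred c)\<^sup>*\<^sup>* (subst t 0 s) (subst L 0 s)"
    using L(1) assms(3) by (rule sreds_subst)
  also note R(1)
  finally show ?thesis
    using R(2) by blast
qed

lemma par_split: "par c M N \<Longrightarrow> ((sred c)\<^sup>*\<^sup>* OO ipar c) M N"
proof (induction rule: par.induct)
  case (plam t t')
  show ?case
  proof (cases "c = CbnHead")
    case True
    with plam.IH show ?thesis by (auto intro: sreds_Lam ipar.ilam_n)
  next
    case False
    with plam.hyps show ?thesis
      by (intro ipar_imp_sreds_ipar ipar.ilam_v) (simp_all add: is_cbv_iff)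
  qed
next
  case (papp s s' t t')
  then show ?case by (rule sreds_ipar_App)
next
  case (pop ts ts' f)
  then show ?case
    by (auto intro!: ipar_imp_sreds_ipar ipar.iop elim!: list_all2_mono)
next
  case (pbeta t t' s s')
  then show ?case by (intro sreds_ipar_beta)
qed (intro ipar_imp_sreds_ipar ipar.ivar)

lemma ipar_Lam_inv:
  "ipar c s (Lam t') \<Longrightarrow> \<exists>t. s = Lam t \<and> par c t t' \<and> (c = CbnHead \<longrightarrow> ipar c t t')"
  by (erule ipar.cases) (auto intro: ipar_imp_par simp: is_cbv_iff)

lemma ipar_App_inv:
  "ipar c M (App P Q) \<Longrightarrow> \<exists>s t. M = App s t \<and> par c s P \<and> par c t Q
     \<and> (c \<noteq> CbvRight \<or> is_val Q \<longrightarrow> ipar c s P)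
     \<and> (c = CbvWeak \<or> c = CbvRight \<or> c = CbvLeft \<and> is_val P \<longrightarrow> ipar c t Q)"
  by (erule ipar.cases) (auto intro: ipar_imp_par simp: ipar_val_iff)

lemma ipar_sred_imp_par: "sred c M' M'' \<Longrightarrow> ipar c M M' \<Longrightarrow> par c M M''"
proof (induction arbitrary: M rule: sred.induct)
  case (root M' M'')
  then obtain t' s'
    where M': "M' = App (Lam t') s'" "M'' = subst t' 0 s'" "is_cbv c \<longrightarrow> is_val s'"
    by (auto simp: rootstep_iff)
  from root.prems[unfolded M'(1)] show ?case
    unfolding M'(2) using M'(3)
    by (cases rule: ipar.cases)
      (auto dest!: ipar_Lam_inv intro!: par.pbeta intro: ipar_imp_par simp: ipar_val_iff is_cbv_iff)
qed (auto dest!: ipar_Lam_inv ipar_App_inv intro!: par.plam par.papp)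

lemma ipar_sred_postpone: "ipar c M M' \<Longrightarrow> sred c M' M'' \<Longrightarrow> ((sred c)\<^sup>*\<^sup>* OO ipar c) M M''"
  using ipar_sred_imp_par par_split by blast

lemma ipar_sreds_postpone:
  "(sred c)\<^sup>*\<^sup>* M' N \<Longrightarrow> ipar c M M' \<Longrightarrow> ((sred c)\<^sup>*\<^sup>* OO ipar c) M N"
proof (induction rule: rtranclp_induct)
  case (step y z)
  then obtain L1 where "(sred c)\<^sup>*\<^sup>* M L1" "ipar c L1 y"
    by blast
  moreover from ipar_sred_postpone[OF this(2) step.hyps(2)] obtain L2
    where "(sred c)\<^sup>*\<^sup>* L1 L2" "ipar c L2 z"
    by blast
  ultimately show ?case
    by (blast intro: rtranclp_trans)
qed blast

lemma ipars_sreds_postpone: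
  "(ipar c)\<^sup>*\<^sup>* M M' \<Longrightarrow> (sred c)\<^sup>*\<^sup>* M' N \<Longrightarrow> ((sred c)\<^sup>*\<^sup>* OO (ipar c)\<^sup>*\<^sup>*) M N"
proof (induction arbitrary: N rule: converse_rtranclp_induct)
  case (step y z)
  then obtain L1 where L1: "(sred c)\<^sup>*\<^sup>* z L1" "(ipar c)\<^sup>*\<^sup>* L1 N"
    by blast
  from ipar_sreds_postpone[OF L1(1) step.hyps(1)] obtain L0
    where "(sred c)\<^sup>*\<^sup>* y L0" "ipar c L0 L1"
    by blast
  with L1(2) show ?case
    by (blast intro: converse_rtranclp_into_rtranclp)
qed blast

lemma step_sred_or_ipar: "step c M N \<Longrightarrow> sred c M N \<or> ipar c M N"
proof (induction rule: step.induct)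
  case (root M N)
  then show ?case by (blast intro: sred.root)
next
  case (appL M M' N)
  show ?case
    by (insert appL, cases c; cases "is_val N")
      (auto intro: sred.intros ipar.intros ipar_refl par_refl step_imp_par)
next
  case (appR N N' M)
  show ?case
    by (insert appR, cases c; cases "is_val M")
      (auto intro: sred.intros ipar.intros ipar_refl par_refl step_imp_par)
next
  case (lam M M')
  then show ?case
    by (cases "c = CbnHead") (auto intro: sred.intros ipar.intros step_imp_par simp: is_cbv_iff)
next
  case (op M M' f xs ys)
  then show ?case
    by (auto intro!: ipar.iop list_all2_appendI step_imp_par simp: list_all2_same par_refl)
qed

lemma steps_factorization: "(step c)\<^sup>*\<^sup>* M N \<Longrightarrow> ((sred c)\<^sup>*\<^sup>* OO (ipar c)\<^sup>*\<^sup>*) M N"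
proof (induction rule: rtranclp_induct)
  case (step y z)
  then obtain L where L: "(sred c)\<^sup>*\<^sup>* M L" "(ipar c)\<^sup>*\<^sup>* L y"
    by blast
  from step_sred_or_ipar[OF step.hyps(2)] show ?case
  proof
    assume "sred c y z"
    with ipars_sreds_postpone[OF L(2)] obtain L'
      where "(sred c)\<^sup>*\<^sup>* L L'" "(ipar c)\<^sup>*\<^sup>* L' z"
      by blast
    with L(1) show ?thesis
      by (blast intro: rtranclp_trans)
  next
    assume "ipar c y z"
    with L show ?thesis
      by (blast intro: rtranclp.rtrancl_into_rtrancl)
  qed
qed blast

lemma ipar_reflects_snormal: "ipar c M M' \<Longrightarrow> snormal c M' \<Longrightarrow> snormal c M"
  by (induction rule: ipar.induct) (auto simp: snormal_App ipar_shape is_val_iff_shape)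

lemma ipars_reflect_snormal: "(ipar c)\<^sup>*\<^sup>* M M' \<Longrightarrow> snormal c M' \<Longrightarrow> snormal c M"
  by (induction rule: converse_rtranclp_induct) (auto dest: ipar_reflects_snormal)

section \<open>Normalization\<close>

lemma rtranclp_Op:
  assumes R: "\<And>xs P P' ys. R P P' \<Longrightarrow> R (Op f (xs @ P # ys)) (Op f (xs @ P' # ys))"
    and "list_all2 R\<^sup>*\<^sup>* ts ns"
  shows "R\<^sup>*\<^sup>* (Op f ts) (Op f ns)"
proof -
  have "R\<^sup>*\<^sup>* (Op f (xs @ ts)) (Op f (xs @ ns))" for xs
    using assms(2)
  proof (induction arbitrary: xs rule: list_all2_induct)
    case (Cons t ts n ns)
    have "R\<^sup>*\<^sup>* (Op f (xs @ t # ts)) (Op f (xs @ n # ts))"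
      using rtranclp_map[of R R "\<lambda>P. Op f (xs @ P # ts)", OF R Cons.hyps(1)] .
    also have "R\<^sup>*\<^sup>* (Op f (xs @ n # ts)) (Op f (xs @ n # ns))"
      using Cons.IH[of "xs @ [n]"] by simp
    finally show ?case .
  qed simp
  from this[of "[]"] show ?thesis by simp
qed

lemma steps_App: "(step c)\<^sup>*\<^sup>* s s' \<Longrightarrow> (step c)\<^sup>*\<^sup>* t t' \<Longrightarrow> (step c)\<^sup>*\<^sup>* (App s t) (App s' t')"
  using rtranclp_map[of "step c" "step c" "\<lambda>x. App x t", OF step.appL]
    rtranclp_map[of "step c" "step c" "\<lambda>x. App s' x", OF step.appR]
  by (blast intro: rtranclp_trans)

lemma par_imp_steps: "par c M N \<Longrightarrow> (step c)\<^sup>*\<^sup>* M N"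
proof (induction rule: par.induct)
  case (plam t t')
  then show ?case using rtranclp_map[of "step c" "step c" Lam, OF step.lam] by blast
next
  case (papp s s' t t')
  then show ?case by (intro steps_App)
next
  case (pop ts ts' f)
  then have "list_all2 (step c)\<^sup>*\<^sup>* ts ts'"
    by (auto elim: list_all2_mono)
  then show ?case
    by (rule rtranclp_Op[rotated]) (rule step.op)
next
  case (pbeta t t' s s')
  then have "(step c)\<^sup>*\<^sup>* (App (Lam t) s) (App (Lam t') s')"
    using rtranclp_map[of "step c" "step c" Lam, OF step.lam] by (blast intro: steps_App)
  moreover have "step c (App (Lam t') s') (subst t' 0 s')"
    using pbeta by (auto intro!: step.root simp: rootstep_iff par_val)
  ultimately show ?case by (rule rtranclp.rtrancl_into_rtrancl)
qed simp

lemma ipars_imp_steps: "(ipar c)\<^sup>*\<^sup>* M N \<Longrightarrow> (step c)\<^sup>*\<^sup>* M N"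
  by (induction rule: rtranclp_induct) (auto dest!: ipar_imp_par par_imp_steps)

lemma sreds_imp_ureds: "(sred c)\<^sup>*\<^sup>* M N \<Longrightarrow> (ured c)\<^sup>*\<^sup>* M N"
  by (induction rule: rtranclp_induct) (auto intro: ured.surf rtranclp.rtrancl_into_rtrancl)

lemma steps_Var: "(step c)\<^sup>*\<^sup>* (Var i) N \<Longrightarrow> N = Var i"
  by (induction rule: rtranclp_induct) auto

lemma steps_Lam: "(step c)\<^sup>*\<^sup>* (Lam P) N \<Longrightarrow> \<exists>P'. N = Lam P' \<and> (step c)\<^sup>*\<^sup>* P P'"
  by (induction rule: rtranclp_induct)
    (auto simp: step_Lam_iff intro: rtranclp.rtrancl_into_rtrancl)

lemma steps_Op: "(step c)\<^sup>*\<^sup>* (Op f ts) N \<Longrightarrow> \<exists>ns. N = Op f ns \<and> list_all2 (step c)\<^sup>*\<^sup>* ts ns"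
proof (induction rule: rtranclp_induct)
  case (step y z)
  then obtain ns where ns: "y = Op f ns" "list_all2 (step c)\<^sup>*\<^sup>* ts ns"
    by blast
  with step.hyps(2) obtain xs P P' ys
    where z: "ns = xs @ P # ys" "z = Op f (xs @ P' # ys)" "step c P P'"
    by (auto simp: step_Op_iff)
  from ns(2)[unfolded z(1) list_all2_append2 list_all2_Cons2] obtain us p vs
    where "ts = us @ p # vs" "list_all2 (step c)\<^sup>*\<^sup>* us xs" "(step c)\<^sup>*\<^sup>* p P"
      "list_all2 (step c)\<^sup>*\<^sup>* vs ys"
    by blast
  with z show ?case
    by (auto intro!: list_all2_appendI intro: rtranclp.rtrancl_into_rtrancl)
qed (auto simp: list_all2_same)

lemma steps_preserve_snormal: "(step c)\<^sup>*\<^sup>* M N \<Longrightarrow> snormal c M \<Longrightarrow> snormal c N"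
  by (induction rule: rtranclp_induct) (auto dest: step_preserves_snormal)

lemma snormal_steps_App:
  "(step c)\<^sup>*\<^sup>* (App P Q) N \<Longrightarrow> snormal c (App P Q) \<Longrightarrow>
   \<exists>P' Q'. N = App P' Q' \<and> (step c)\<^sup>*\<^sup>* P P' \<and> (step c)\<^sup>*\<^sup>* Q Q'"
proof (induction rule: rtranclp_induct)
  case (step y z)
  then obtain P' Q' where y: "y = App P' Q'" "(step c)\<^sup>*\<^sup>* P P'" "(step c)\<^sup>*\<^sup>* Q Q'"
    by blast
  have "snormal c y"
    using step.hyps(1) step.prems by (rule steps_preserve_snormal)
  with step.hyps(2) y show ?case
    by (auto elim!: step_AppE simp: snormal_def intro: sred.root rtranclp.rtrancl_into_rtrancl)
qed blast

lemma ureds_Lam: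
  "(ured c)\<^sup>*\<^sup>* P P' \<Longrightarrow> snormal c (Lam P) \<Longrightarrow>
   (ured c)\<^sup>*\<^sup>* (Lam P) (Lam P') \<and> snormal c (Lam P')"
proof (induction rule: rtranclp_induct)
  case (step y z)
  then have "ured c (Lam y) (Lam z)"
    by (auto intro: ured.lam)
  with step show ?case
    by (auto intro: rtranclp.rtrancl_into_rtrancl ured_preserves_snormal)
qed simp

lemma ureds_appL:
  "(ured c)\<^sup>*\<^sup>* P P' \<Longrightarrow> snormal c (App P Q) \<Longrightarrow>
   (ured c)\<^sup>*\<^sup>* (App P Q) (App P' Q) \<and> snormal c (App P' Q)"
  by (induction rule: rtranclp_induct)
    (auto intro: rtranclp.rtrancl_into_rtrancl ured.appL ured_preserves_snormal)

lemma ureds_appR: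
  "(ured c)\<^sup>*\<^sup>* Q Q' \<Longrightarrow> snormal c (App P Q) \<Longrightarrow>
   (ured c)\<^sup>*\<^sup>* (App P Q) (App P Q') \<and> snormal c (App P Q')"
  by (induction rule: rtranclp_induct)
    (auto intro: rtranclp.rtrancl_into_rtrancl ured.appR ured_preserves_snormal)

lemma ureds_Op: "list_all2 (ured c)\<^sup>*\<^sup>* ts ns \<Longrightarrow> (ured c)\<^sup>*\<^sup>* (Op f ts) (Op f ns)"
  by (rule rtranclp_Op) (simp_all add: ured.op)

definition normal :: "calc \<Rightarrow> 'o trm \<Rightarrow> bool" where
  "normal c N \<longleftrightarrow> (\<nexists>N'. step c N N')"

lemma normal_Lam: "normal c (Lam N) \<Longrightarrow> normal c N"
  unfolding normal_def by (auto intro: step.lam)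

lemma normal_App: "normal c (App P Q) \<Longrightarrow> normal c P \<and> normal c Q"
  unfolding normal_def by (auto intro: step.appL step.appR)

lemma normal_Op: "normal c (Op f ns) \<Longrightarrow> n \<in> set ns \<Longrightarrow> normal c n"
  unfolding normal_def by (auto dest!: split_list intro: step.op)

lemma normal_imp_snormal: "normal c N \<Longrightarrow> snormal c N"
  unfolding normal_def snormal_def using sred_imp_step by blast

lemma size_Op_arg: "n \<in> set ns \<Longrightarrow> size n < size (Op f ns)"
  by (induction ns) auto

lemma steps_to_normal_through_snormal:
  assumes "normal c N" and "(step c)\<^sup>*\<^sup>* M N"
  obtains L where "(sred c)\<^sup>*\<^sup>* M L" and "snormal c L" and "(step c)\<^sup>*\<^sup>* L N"
proof -
  from steps_factorization[OF assms(2)] obtain L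
    where surface: "(sred c)\<^sup>*\<^sup>* M L" and internal: "(ipar c)\<^sup>*\<^sup>* L N"
    by blast
  show ?thesis
  proof (rule that[OF surface])
    show "snormal c L"
      using ipars_reflect_snormal[OF internal] normal_imp_snormal[OF assms(1)] .
    show "(step c)\<^sup>*\<^sup>* L N"
      using ipars_imp_steps[OF internal] .
  qed
qed

lemma normal_steps_imp_ureds: "normal c N \<Longrightarrow> (step c)\<^sup>*\<^sup>* M N \<Longrightarrow> (ured c)\<^sup>*\<^sup>* M N"
proof (induction N arbitrary: M rule: measure_induct_rule[where f = size])
  case (less N)
  from steps_to_normal_through_snormal[OF less.prems] obtain L
    where surface: "(sred c)\<^sup>*\<^sup>* M L" and L: "snormal c L" "(step c)\<^sup>*\<^sup>* L N"
    by blast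
  have "(ured c)\<^sup>*\<^sup>* L N"
  proof (cases L)
    case (Var i)
    with L show ?thesis by (auto dest: steps_Var)
  next
    case (Lam P)
    with L obtain P' where N: "N = Lam P'" "(step c)\<^sup>*\<^sup>* P P'"
      by (auto dest: steps_Lam)
    with less.prems(1) have "(ured c)\<^sup>*\<^sup>* P P'"
      by (auto intro: less.IH dest: normal_Lam)
    with Lam L(1) N(1) show ?thesis
      using ureds_Lam by blast
  next
    case (App P Q)
    with L obtain P' Q' where N: "N = App P' Q'" "(step c)\<^sup>*\<^sup>* P P'" "(step c)\<^sup>*\<^sup>* Q Q'"
      by (auto dest: snormal_steps_App)
    with less.prems(1) have "(ured c)\<^sup>*\<^sup>* P P'" "(ured c)\<^sup>*\<^sup>* Q Q'"
      by (auto intro: less.IH dest: normal_App)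
    with App L(1) N(1) show ?thesis
      using ureds_appL ureds_appR by (blast intro: rtranclp_trans)
  next
    case (Op f ts)
    with L obtain ns where N: "N = Op f ns" "list_all2 (step c)\<^sup>*\<^sup>* ts ns"
      by (auto dest: steps_Op)
    from N(2) have "list_all2 (ured c)\<^sup>*\<^sup>* ts ns"
    proof (rule list.rel_mono_strong)
      fix t n
      assume "n \<in> set ns" "(step c)\<^sup>*\<^sup>* t n"
      with less.prems(1) N(1) show "(ured c)\<^sup>*\<^sup>* t n"
        by (auto intro: less.IH size_Op_arg normal_Op)
    qed
    with Op N(1) show ?thesis
      by (simp add: ureds_Op)
  qed
  with surface show ?case
    by (blast intro: sreds_imp_ureds rtranclp_trans)
qed

theorem mainTheorem4:
  fixes c :: calc and ar :: "'o \<Rightarrow> nat"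
  shows "(\<forall>M M1 M2 :: 'o trm. wf ar M \<longrightarrow> ured c M M1 \<longrightarrow> ured c M M2 \<longrightarrow>
            M1 = M2 \<or> (\<exists>P. ured c M1 P \<and> ured c M2 P))
       \<and> (\<forall>M :: 'o trm. wf ar M \<longrightarrow> ((\<nexists>N. ured c M N) \<longleftrightarrow> (\<nexists>N. step c M N)))
       \<and> (\<forall>M N :: 'o trm. wf ar M \<longrightarrow> (\<nexists>N'. step c N N') \<longrightarrow> (step c)\<^sup>*\<^sup>* M N
            \<longrightarrow> (ured c)\<^sup>*\<^sup>* M N)"
  using ured_diamond ured_nf_iff_step_nf normal_steps_imp_ureds unfolding normal_def by blast

end
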